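(* Let $\{\lambda_k\}_{k\ge 0}$ be a sequence of positive scalars and, for each $k$, let $x_{\lambda_k}^*$ denote the unique minimizer of $f+\lambda_k h$ over $X$. Then: (a) for all $k\ge 1$, $\displaystyle \|x_{\lambda_k}^*-x_{\lambda_{k-1}}^*\|\le \frac{C_h}{\mu_h}\left|1-\frac{\lambda_{k-1}}{\lambda_k}\right|$; (b) if $\lambda_k\to 0$, then $x_{\lambda_k}^*\to x_h^*$.
   Context: Standing setup: $X\subset\mathbb{R}^n$ is nonempty, compact and convex. $f_1,\dots,f_m:\mathbb{R}^n\to\mathbb{R}$ are convex (possibly nondifferentiable) functions and $f=\sum_{i=1}^m f_i$. $h:\mathbb{R}^n\to\mathbb{R}$ is strongly convex with parameter $\mu_h>0$ (possibly nondifferentiable), i.e. $h(y)\ge h(x)+g^T(y-x)+\frac{\mu_h}{2}\|y-x\|^2$ for all $x,y$ and all $g\in\partial h(x)$. Let $f^*=\min_{x\in X}f(x)$, $X^*=\arg\min_{x\in X}f(x)$, and let $x_h^*$ be the unique minimizer of $h$ over $X^*$ (the bilevel problem: minimize $h(x)$ subject to $x\in X^*$). For $\lambda>0$, $x_\lambda^*$ denotes the unique minimizer of $f+\lambda h$ over $X$. $C_f,C_h$ are constants such that $\|g\|\le C_f$ for every $g\in\partial f_i(x)$, $i=1,\dots,m$, $x\in X$, and $\|g\|\le C_h$ for every $g\in\partial h(x)$, $x\in X$. $\|\cdot\|$ is the Euclidean norm. *)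

theory Defs
  imports "HOL-Analysis.Analysis"
begin

definition subgrad :: "('a::euclidean_space \<Rightarrow> real) \<Rightarrow> 'a \<Rightarrow> 'a set" where
  "subgrad h x = {g. \<forall>y. h y \<ge> h x + inner g (y - x)}"

definition strongly_convex :: "('a::euclidean_space \<Rightarrow> real) \<Rightarrow> real \<Rightarrow> bool" where
  "strongly_convex h mu \<longleftrightarrow> convex_on UNIV h \<and> mu > 0 \<and>
     (\<forall>x y. \<forall>g\<in>subgrad h x. h y \<ge> h x + inner g (y - x) + mu / 2 * (norm (y - x))\<^sup>2)"

definition argmin_set :: "('a \<Rightarrow> real) \<Rightarrow> 'a set \<Rightarrow> 'a set" where
  "argmin_set F X = {x \<in> X. \<forall>y\<in>X. F x \<le> F y}"

end

(*
  Write F_l = f + l h and let a, b minimize F_l', F_l over X. Testing the optimality of b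
  against the point (1-t) b + t a and that of a against (1-t) a + t b, the f-terms cancel
  by convexity of f; strong convexity of h contributes l mu t (1-t) |b-a|^2, and what remains
  is (l - l') times an increment of h over a segment of length t |b-a|, which the subgradient
  bound C_h controls. Dividing by t and letting t -> 0 gives part (a).

  For part (b), comparing x_l with x_h gives h(x_l) <= h(x_h) and
  f(x_l) <= f_min + l (h(x_h) - min_X h). On the compact set {y in X. h y <= h(x_h)} the point
  x_h is the strict minimizer of f (strong convexity of h makes the bilevel solution unique),
  so these nearly minimizing points converge to it as l -> 0.
*)

theory Submission
  imports Defs
begin

lemma convex_strict_epigraph:
  fixes h :: "'a::real_vector \<Rightarrow> real"
  assumes "convex_on UNIV h"
  shows "convex {p. h (fst p) < snd p}"
  unfolding convex_def
proof clarsimp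
  fix x y :: 'a and s r u v :: real
  assume hx: "h x < s" and hy: "h y < r" and uv: "0 \<le> u" "0 \<le> v" "u + v = 1"
  have u: "u = 1 - v" using uv by simp
  have "h (u *\<^sub>R x + v *\<^sub>R y) \<le> u * h x + v * h y"
    using convex_onD[OF assms, of v x y] uv unfolding u by simp
  also have "\<dots> < u * s + v * r"
  proof (cases "u = 0")
    case True
    then show ?thesis using uv hy by simp
  next
    case False
    then show ?thesis
      using uv hx hy by (intro add_less_le_mono mult_strict_left_mono mult_left_mono) auto
  qed
  finally show "h (u *\<^sub>R x + v *\<^sub>R y) < u * s + v * r" .
qed

(* A hyperplane separating (x, h x) from the strict epigraph is non-vertical (c \<noteq> 0);
   rescaled to normal (g, -1) it supports the graph of h at x. *)
lemma subgrad_nonempty: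
  fixes h :: "'a::euclidean_space \<Rightarrow> real"
  assumes "convex_on UNIV h"
  shows "subgrad h x \<noteq> {}"
proof -
  have "{p. h (fst p) < snd p} \<inter> {(x, h x)} = {}" "(x, h x + 1) \<in> {p. h (fst p) < snd p}"
    by auto
  then obtain a B where "a \<noteq> 0" and below: "\<forall>p\<in>{p. h (fst p) < snd p}. inner a p \<le> B"
    and above: "inner a (x, h x) \<ge> B"
    using separating_hyperplane_sets[OF convex_strict_epigraph[OF assms] convex_singleton]
    by blast
  obtain v c where a: "a = (v, c)" by fastforce
  have sep: "inner v y + c * s \<le> inner v x + c * h x" if "h y < s" for y s
    using below that above by (force simp: a)
  have "c \<le> 0"
    using sep[of x "h x + 1"] by (simp add: distrib_left)
  moreover have "c \<noteq> 0"
  proof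
    assume "c = 0"
    then have "inner v v \<le> 0"
      using sep[of "x + v" "h (x + v) + 1"] by (simp add: inner_add_right)
    moreover have "v \<noteq> 0"
      using \<open>a \<noteq> 0\<close> \<open>c = 0\<close> by (simp add: a zero_prod_def)
    ultimately show False
      by (metis inner_gt_zero_iff not_le)
  qed
  ultimately have "c < 0" by simp
  have key: "inner v y + c * h y \<le> inner v x + c * h x" for y
  proof (rule field_le_epsilon)
    fix e :: real assume "e > 0"
    have "inner v y + c * (h y + e / - c) \<le> inner v x + c * h x"
      using sep \<open>c < 0\<close> \<open>e > 0\<close> by (simp add: divide_pos_neg)
    then show "inner v y + c * h y \<le> inner v x + c * h x + e"
      using \<open>c < 0\<close> by (simp add: right_diff_distrib)
  qed
  have "(inner v x - inner v y) / c \<le> h y - h x" for y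
    using key[of y] by (subst neg_divide_le_eq[OF \<open>c < 0\<close>]) (simp add: algebra_simps)
  then have "(- (1 / c)) *\<^sub>R v \<in> subgrad h x"
    by (simp add: subgrad_def inner_diff_right diff_divide_distrib add.commute le_diff_eq)
  then show ?thesis by blast
qed

lemma le_if_one_minus_mult_le:
  fixes P Q :: real
  assumes "\<And>t. 0 < t \<Longrightarrow> t < 1 \<Longrightarrow> (1 - t) * P \<le> Q"
  shows "P \<le> Q"
proof (rule tendsto_le[OF trivial_limit_at_right_real])
  show "((\<lambda>t. (1 - t) * P) \<longlongrightarrow> P) (at_right 0)"
    by (auto intro!: tendsto_eq_intros)
  show "((\<lambda>t. Q) \<longlongrightarrow> Q) (at_right 0)" by simp
  show "\<forall>\<^sub>F t in at_right 0. (1 - t) * P \<le> Q"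
    unfolding eventually_at_right[OF zero_less_one] using assms by (intro exI[of _ 1]) auto
qed

lemma convex_on_sum_functions:
  fixes g :: "'i \<Rightarrow> 'a::real_vector \<Rightarrow> real"
  assumes "convex S" and "\<And>i. i \<in> I \<Longrightarrow> convex_on S (g i)"
  shows "convex_on S (\<lambda>x. \<Sum>i\<in>I. g i x)"
  using assms(2)
proof (induction I rule: infinite_finite_induct)
  case (insert i I)
  then show ?case by (simp add: convex_on_add)
qed (simp_all add: convex_on_const assms(1))

lemma bounded_subgrad_imp_lipschitz_on:
  fixes h :: "'a::euclidean_space \<Rightarrow> real"
  assumes "convex_on UNIV h" and "X \<noteq> {}"
    and bound: "\<And>x g. x \<in> X \<Longrightarrow> g \<in> subgrad h x \<Longrightarrow> norm g \<le> C"
  shows "C-lipschitz_on X h"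
proof (rule lipschitz_onI)
  have one_sided: "h x - h y \<le> C * dist x y" if "x \<in> X" for x y
  proof -
    obtain g where g: "g \<in> subgrad h x"
      using subgrad_nonempty[OF assms(1)] by blast
    have "- inner g (y - x) \<le> norm g * norm (y - x)"
      using Cauchy_Schwarz_ineq2[of g "y - x"] by linarith
    also have "\<dots> \<le> C * dist x y"
      using bound[OF that g] by (simp add: dist_norm norm_minus_commute mult_right_mono)
    finally have "- inner g (y - x) \<le> C * dist x y" .
    moreover have "h x + inner g (y - x) \<le> h y"
      using g by (simp add: subgrad_def)
    ultimately show ?thesis by linarith
  qed
  show "dist (h x) (h y) \<le> C * dist x y" if "x \<in> X" "y \<in> X" for x y
    using one_sided[OF that(1), of y] one_sided[OF that(2), of x]
    by (simp add: dist_real_def dist_commute)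
  obtain x g where "x \<in> X" "g \<in> subgrad h x"
    using assms(2) subgrad_nonempty[OF assms(1)] by blast
  then show "0 \<le> C"
    using bound norm_ge_zero order_trans by blast
qed

lemma strongly_convex_combination_le:
  fixes h :: "'a::euclidean_space \<Rightarrow> real"
  assumes "strongly_convex h mu" and t: "0 \<le> t" "t \<le> 1"
  shows "h ((1 - t) *\<^sub>R x + t *\<^sub>R y)
           \<le> (1 - t) * h x + t * h y - mu / 2 * (t * (1 - t)) * (norm (y - x))\<^sup>2"
proof -
  define z where "z = (1 - t) *\<^sub>R x + t *\<^sub>R y"
  have growth: "h w \<ge> h z + inner g (w - z) + mu / 2 * (norm (w - z))\<^sup>2"
    if "g \<in> subgrad h z" for g w
    using assms(1) that unfolding strongly_convex_def by blast
  obtain g where g: "g \<in> subgrad h z"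
    using assms(1) subgrad_nonempty unfolding strongly_convex_def by blast
  define N where "N = (norm (y - x))\<^sup>2"
  define G where "G = inner g (x - y)"
  have xz: "x - z = t *\<^sub>R (x - y)" and yz: "y - z = - ((1 - t) *\<^sub>R (x - y))"
    unfolding z_def by (simp_all add: algebra_simps)
  have "(norm (x - z))\<^sup>2 = t\<^sup>2 * N" "(norm (y - z))\<^sup>2 = (1 - t)\<^sup>2 * N"
    using t unfolding xz yz N_def by (simp_all add: power_mult_distrib norm_minus_commute)
  moreover have "inner g (x - z) = t * G" "inner g (y - z) = - ((1 - t) * G)"
    unfolding xz yz G_def by simp_all
  ultimately have hx: "h x \<ge> h z + t * G + mu / 2 * (t\<^sup>2 * N)"
    and hy: "h y \<ge> h z - (1 - t) * G + mu / 2 * ((1 - t)\<^sup>2 * N)"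
    using growth[OF g, of x] growth[OF g, of y] by simp_all
  have "(1 - t) * (h z + t * G + mu / 2 * (t\<^sup>2 * N))
        + t * (h z - (1 - t) * G + mu / 2 * ((1 - t)\<^sup>2 * N))
        \<le> (1 - t) * h x + t * h y"
    using hx hy t by (intro add_mono mult_left_mono) auto
  moreover have "(1 - t) * (h z + t * G + mu / 2 * (t\<^sup>2 * N))
        + t * (h z - (1 - t) * G + mu / 2 * ((1 - t)\<^sup>2 * N))
        = h z + mu / 2 * (t * (1 - t)) * N"
    by (simp add: field_simps power2_eq_square)
  ultimately show ?thesis
    unfolding z_def[symmetric] N_def[symmetric] by linarith
qed

lemma argmin_convex_plus_variational_ineq:
  fixes f g :: "'a::real_vector \<Rightarrow> real"
  assumes "convex X" and "convex_on UNIV f"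
    and b: "b \<in> argmin_set (\<lambda>x. f x + g x) X"
    and "y \<in> X" and "0 \<le> t" "t \<le> 1"
  shows "0 \<le> t * (f y - f b) + (g ((1 - t) *\<^sub>R b + t *\<^sub>R y) - g b)"
proof -
  have "b \<in> X" using b by (simp add: argmin_set_def)
  then have "(1 - t) *\<^sub>R b + t *\<^sub>R y \<in> X"
    using assms(1,4-6) by (intro convexD) auto
  then have "f b + g b \<le> f ((1 - t) *\<^sub>R b + t *\<^sub>R y) + g ((1 - t) *\<^sub>R b + t *\<^sub>R y)"
    using b by (simp add: argmin_set_def)
  moreover have "f ((1 - t) *\<^sub>R b + t *\<^sub>R y) \<le> (1 - t) * f b + t * f y"
    using convex_onD[OF assms(2)] assms(5,6) by simp
  ultimately show ?thesis
    by (simp add: algebra_simps)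
qed

lemma dist_argmin_regularized_le:
  fixes X :: "'a::euclidean_space set" and f h :: "'a \<Rightarrow> real"
  assumes X: "convex X" and f: "convex_on UNIV f" and h: "strongly_convex h mu"
    and lip: "C-lipschitz_on X h" and "l > 0" "l' > 0"
    and a: "a \<in> argmin_set (\<lambda>x. f x + l' * h x) X"
    and b: "b \<in> argmin_set (\<lambda>x. f x + l * h x) X"
  shows "norm (b - a) \<le> C / mu * \<bar>1 - l' / l\<bar>"
proof -
  have "mu > 0" using h by (simp add: strongly_convex_def)
  have "a \<in> X" "b \<in> X" using a b by (simp_all add: argmin_set_def)
  define d where "d = norm (b - a)"
  have "(1 - t) * (l * mu * d\<^sup>2) \<le> \<bar>l - l'\<bar> * C * d" if t: "0 < t" "t < 1" for t
  proof -
    define Hb where "Hb = h ((1 - t) *\<^sub>R b + t *\<^sub>R a) - h b"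
    define Ha where "Ha = h ((1 - t) *\<^sub>R a + t *\<^sub>R b) - h a"
    have opt_b: "0 \<le> t * (f a - f b) + l * Hb"
      using argmin_convex_plus_variational_ineq[OF X f b \<open>a \<in> X\<close>] t
      by (simp add: Hb_def right_diff_distrib)
    have opt_a: "0 \<le> t * (f b - f a) + l' * Ha"
      using argmin_convex_plus_variational_ineq[OF X f a \<open>b \<in> X\<close>] t
      by (simp add: Ha_def right_diff_distrib)
    have "Hb + Ha \<le> - (mu * (t * (1 - t)) * d\<^sup>2)"
      using strongly_convex_combination_le[OF h, of t b a]
        strongly_convex_combination_le[OF h, of t a b] t
      by (simp add: Ha_def Hb_def d_def norm_minus_commute field_simps)
    then have curvature: "l * (Hb + Ha) \<le> l * (- (mu * (t * (1 - t)) * d\<^sup>2))"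
      using \<open>l > 0\<close> by (intro mult_left_mono) auto
    have "\<bar>Ha\<bar> \<le> C * (t * d)"
    proof -
      have "(1 - t) *\<^sub>R a + t *\<^sub>R b \<in> X"
        using X \<open>a \<in> X\<close> \<open>b \<in> X\<close> t by (intro convexD) auto
      moreover have "norm ((1 - t) *\<^sub>R a + t *\<^sub>R b - a) = t * d"
        using t by (simp add: d_def algebra_simps flip: scaleR_diff_right)
      ultimately show ?thesis
        using lipschitz_on_normD[OF lip _ \<open>a \<in> X\<close>] by (force simp: Ha_def)
    qed
    then have drift: "- ((l - l') * Ha) \<le> \<bar>l - l'\<bar> * (C * (t * d))"
      by (metis abs_ge_minus_self abs_ge_zero abs_mult mult_left_mono order_trans)
    have "l * Hb + l' * Ha = l * (Hb + Ha) - (l - l') * Ha"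
      by (simp add: algebra_simps)
    then have "t * ((1 - t) * (l * mu * d\<^sup>2)) \<le> t * (\<bar>l - l'\<bar> * C * d)"
      using opt_a opt_b curvature drift by (simp add: algebra_simps)
    then show ?thesis using t by simp
  qed
  then have "l * mu * d\<^sup>2 \<le> \<bar>l - l'\<bar> * C * d"
    by (rule le_if_one_minus_mult_le)
  then have "d \<le> \<bar>l - l'\<bar> * C / (l * mu)"
    using \<open>l > 0\<close> \<open>mu > 0\<close> lipschitz_on_nonneg[OF lip]
    by (cases "d = 0") (simp_all add: field_simps power2_eq_square d_def)
  moreover have "\<bar>1 - l' / l\<bar> = \<bar>l - l'\<bar> / l"
    using \<open>l > 0\<close> by (simp add: field_simps abs_div_pos[symmetric])
  ultimately show ?thesis
    by (simp add: d_def mult.commute)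
qed

lemma bilevel_argmin_unique:
  fixes X :: "'a::euclidean_space set" and f h :: "'a \<Rightarrow> real"
  assumes X: "convex X" and f: "convex_on UNIV f" and h: "strongly_convex h mu"
    and xh: "xh \<in> argmin_set h (argmin_set f X)"
    and "y \<in> X" and "f y \<le> f xh" and "h y \<le> h xh"
  shows "y = xh"
proof -
  have "mu > 0" using h by (simp add: strongly_convex_def)
  have "xh \<in> X" and fmin: "\<And>z. z \<in> X \<Longrightarrow> f xh \<le> f z"
    using xh by (auto simp: argmin_set_def)
  define m where "m = (1 - 1 / 2) *\<^sub>R xh + (1 / 2 :: real) *\<^sub>R y"
  have "m \<in> X"
    unfolding m_def using X \<open>xh \<in> X\<close> \<open>y \<in> X\<close> by (intro convexD) auto
  moreover have "f m \<le> f xh"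
    using convex_onD[OF f, of "1 / 2" xh y] \<open>f y \<le> f xh\<close> by (simp add: m_def)
  ultimately have "m \<in> argmin_set f X"
    using fmin by (force simp: argmin_set_def)
  then have "h xh \<le> h m"
    using xh by (simp add: argmin_set_def)
  also have "\<dots> \<le> h xh - mu / 8 * (norm (y - xh))\<^sup>2"
    using strongly_convex_combination_le[OF h, of "1 / 2" xh y] \<open>h y \<le> h xh\<close>
    by (simp add: m_def)
  finally have "(norm (y - xh))\<^sup>2 \<le> 0"
    using \<open>mu > 0\<close> by (simp add: mult_le_0_iff)
  then show ?thesis by simp
qed

lemma tendsto_unique_argmin_compact:
  fixes F :: "'a::metric_space \<Rightarrow> real"
  assumes "compact K" and "continuous_on K F"
    and strict: "\<And>y. y \<in> K \<Longrightarrow> y \<noteq> x0 \<Longrightarrow> F x0 < F y"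
    and "\<And>k. xs k \<in> K" and "\<And>k. F (xs k) \<le> F x0 + e k" and "e \<longlonglongrightarrow> 0"
  shows "xs \<longlonglongrightarrow> x0"
  unfolding tendsto_iff
proof (intro allI impI)
  fix r :: real assume "r > 0"
  define Kr where "Kr = K - ball x0 r"
  have near: "dist (xs k) x0 < r" if "xs k \<notin> Kr" for k
    using that \<open>xs k \<in> K\<close> by (auto simp: Kr_def dist_commute)
  show "\<forall>\<^sub>F k in sequentially. dist (xs k) x0 < r"
  proof (cases "Kr = {}")
    case True
    then show ?thesis using near by simp
  next
    case False
    have "compact Kr"
      unfolding Kr_def using \<open>compact K\<close> by (intro compact_diff) auto
    then obtain y0 where "y0 \<in> Kr" and y0: "\<And>y. y \<in> Kr \<Longrightarrow> F y0 \<le> F y"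
      using continuous_attains_inf[OF _ False continuous_on_subset[OF assms(2)]]
      by (auto simp: Kr_def)
    moreover have "y0 \<noteq> x0"
      using \<open>y0 \<in> Kr\<close> \<open>r > 0\<close> by (auto simp: Kr_def)
    ultimately have "F x0 < F y0"
      using strict by (auto simp: Kr_def)
    then have "\<forall>\<^sub>F k in sequentially. e k < F y0 - F x0"
      using \<open>e \<longlonglongrightarrow> 0\<close> by (simp add: order_tendstoD(2))
    then show ?thesis
    proof (rule eventually_mono)
      fix k assume "e k < F y0 - F x0"
      then have "xs k \<notin> Kr"
        using assms(5)[of k] y0 by force
      then show "dist (xs k) x0 < r" by (rule near)
    qed
  qed
qed

lemma argmin_regularized_tendsto_bilevel:
  fixes X :: "'a::euclidean_space set" and f h :: "'a \<Rightarrow> real"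
  assumes "compact X" and X: "convex X" and f: "convex_on UNIV f" and h: "strongly_convex h mu"
    and xh: "xh \<in> argmin_set h (argmin_set f X)"
    and lam: "\<And>k. lam k > 0" and xs: "\<And>k. xs k \<in> argmin_set (\<lambda>x. f x + lam k * h x) X"
    and "lam \<longlonglongrightarrow> 0"
  shows "xs \<longlonglongrightarrow> xh"
proof -
  have "continuous_on UNIV f" "continuous_on UNIV h"
    using f h by (simp_all add: convex_on_continuous strongly_convex_def)
  have "xh \<in> X" and fmin: "\<And>y. y \<in> X \<Longrightarrow> f xh \<le> f y"
    using xh by (auto simp: argmin_set_def)
  obtain ymin where "ymin \<in> X" and hmin: "\<And>y. y \<in> X \<Longrightarrow> h ymin \<le> h y"
    using continuous_attains_inf[OF \<open>compact X\<close> _ continuous_on_subset] \<open>xh \<in> X\<close>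
      \<open>continuous_on UNIV h\<close> by blast
  define K where "K = X \<inter> {y. h y \<le> h xh}"
  have xsK: "xs k \<in> K" and f_xs: "f (xs k) \<le> f xh + lam k * (h xh - h ymin)" for k
  proof -
    have "xs k \<in> X" and opt: "f (xs k) + lam k * h (xs k) \<le> f xh + lam k * h xh"
      using xs[of k] \<open>xh \<in> X\<close> by (auto simp: argmin_set_def)
    then have "lam k * h (xs k) \<le> lam k * h xh"
      using fmin by fastforce
    then show "xs k \<in> K"
      using lam[of k] \<open>xs k \<in> X\<close> by (simp add: K_def)
    have "lam k * (h xh - h (xs k)) \<le> lam k * (h xh - h ymin)"
      using hmin[OF \<open>xs k \<in> X\<close>] lam[of k] by (intro mult_left_mono) auto
    then show "f (xs k) \<le> f xh + lam k * (h xh - h ymin)"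
      using opt by (simp add: algebra_simps)
  qed
  have "compact K"
    unfolding K_def using \<open>compact X\<close> \<open>continuous_on UNIV h\<close>
    by (intro compact_Int_closed closed_Collect_le continuous_on_const)
  moreover have "continuous_on K f"
    using \<open>continuous_on UNIV f\<close> by (rule continuous_on_subset) simp
  moreover have "f xh < f y" if "y \<in> K" "y \<noteq> xh" for y
    using bilevel_argmin_unique[OF X f h xh, of y] that by (force simp: K_def)
  moreover note xsK f_xs
  moreover have "(\<lambda>k. lam k * (h xh - h ymin)) \<longlonglongrightarrow> 0"
    using tendsto_mult_left_zero[OF \<open>lam \<longlonglongrightarrow> 0\<close>] by simp
  ultimately show ?thesis
    by (rule tendsto_unique_argmin_compact)
qed

theorem lemma1:
  fixes X :: "'a::euclidean_space set"
    and fs :: "nat \<Rightarrow> 'a \<Rightarrow> real" and m :: nat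
    and f h :: "'a \<Rightarrow> real" and mu_h C_f C_h :: real
    and lam :: "nat \<Rightarrow> real" and xs :: "nat \<Rightarrow> 'a" and xh :: 'a
  assumes "X \<noteq> {}" and "compact X" and "convex X"
    and "\<And>i. i \<in> {1..m} \<Longrightarrow> convex_on UNIV (fs i)"
    and "f = (\<lambda>x. \<Sum>i=1..m. fs i x)"
    and "strongly_convex h mu_h"
    and "\<And>i x g. i \<in> {1..m} \<Longrightarrow> x \<in> X \<Longrightarrow> g \<in> subgrad (fs i) x \<Longrightarrow> norm g \<le> C_f"
    and "\<And>x g. x \<in> X \<Longrightarrow> g \<in> subgrad h x \<Longrightarrow> norm g \<le> C_h"
    and "xh \<in> argmin_set h (argmin_set f X)"
    and "\<And>k. lam k > 0"
    and "\<And>k. xs k \<in> argmin_set (\<lambda>x. f x + lam k * h x) X"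
  shows "(\<forall>k\<ge>1. norm (xs k - xs (k - 1)) \<le> C_h / mu_h * \<bar>1 - lam (k - 1) / lam k\<bar>)
         \<and> (lam \<longlonglongrightarrow> 0 \<longrightarrow> xs \<longlonglongrightarrow> xh)"
proof -
  have f: "convex_on UNIV f"
    unfolding assms(5) using assms(4) by (intro convex_on_sum_functions) auto
  have "convex_on UNIV h"
    using assms(6) by (simp add: strongly_convex_def)
  then have lip: "C_h-lipschitz_on X h"
    using assms(1,8) by (rule bounded_subgrad_imp_lipschitz_on)
  have "norm (xs k - xs (k - 1)) \<le> C_h / mu_h * \<bar>1 - lam (k - 1) / lam k\<bar>" for k
    by (rule dist_argmin_regularized_le[OF assms(3) f assms(6) lip assms(10,10,11,11)])
  moreover have "lam \<longlonglongrightarrow> 0 \<Longrightarrow> xs \<longlonglongrightarrow> xh"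
    by (rule argmin_regularized_tendsto_bilevel[OF assms(2,3) f assms(6,9-11)])
  ultimately show ?thesis by blast
qed

end
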